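(* Let $k\in\mathbb{N}$ and let $\ell\colon(0,\infty)\to[0,\infty)$ be continuously differentiable on its open support $\operatorname{supp}\ell$ with $\ell'(t)<0$ for all $t\in\operatorname{supp}\ell$. Define $\psi\colon\operatorname{supp}\ell\to\mathbb{R}$ by $\psi(t)=\dfrac{t\,\ell'(t)}{\ell(t)^{1-1/k}}$. Then $\ell\in\Lambda_k$ if and only if $\psi$ is decreasing.
   Context: $\operatorname{supp}\ell=(0,\sup\{t>0:\ell(t)>0\})$. The class $\Lambda_k$ ($k\in\mathbb{N}$) consists of all continuous $\ell\colon(0,\infty)\to[0,\infty]$ such that (i) $\ell$ is strictly decreasing on $\operatorname{supp}\ell$, so that the inverse $\ell^{-1}$ exists on $(0,\|\ell\|_\infty)$ with $\|\ell\|_\infty=\sup_{s>0}\ell(s)$; and (ii) the function $g\colon(0,\|\ell\|_\infty^{1/k})\to\operatorname{supp}\ell$, $g(s)=\ell^{-1}(s^k)$, is log-concave (i.e. $\log g$ is concave). *)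

theory Defs
  imports "HOL-Analysis.Analysis"
begin

text \<open>Open support: supp l = (0, sup {t>0. l t > 0}) (empty if l vanishes on (0,oo)).
  Note t < sup S iff t < s for some s in S.\<close>
definition supp_fun :: "(real \<Rightarrow> real) \<Rightarrow> real set" where
  "supp_fun l = {t. 0 < t \<and> (\<exists>s. 0 < s \<and> 0 < l s \<and> t < s)}"

text \<open>Domain of g: (0, norm_inf(l)^(1/k)), i.e. s > 0 with s^k < sup_{t>0} l t
  (this also covers norm_inf(l) = oo).\<close>
definition g_dom :: "nat \<Rightarrow> (real \<Rightarrow> real) \<Rightarrow> real set" where
  "g_dom k l = {s. 0 < s \<and> (\<exists>t. 0 < t \<and> s ^ k < l t)}"

definition g_fun :: "nat \<Rightarrow> (real \<Rightarrow> real) \<Rightarrow> real \<Rightarrow> real" where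
  "g_fun k l s = the_inv_into (supp_fun l) l (s ^ k)"

definition Lambda :: "nat \<Rightarrow> (real \<Rightarrow> real) set" where
  "Lambda k = {l. continuous_on {0<..} l
      \<and> (\<forall>s\<in>supp_fun l. \<forall>t\<in>supp_fun l. s < t \<longrightarrow> l t < l s)
      \<and> (\<forall>s\<in>g_dom k l. \<exists>t\<in>supp_fun l. l t = s ^ k)
      \<and> concave_on (g_dom k l) (\<lambda>s. ln (g_fun k l s))}"

end

theory Submission
  imports Defs
begin

text \<open>Substituting \<open>t = exp u\<close>, put \<open>\<phi> u = l (exp u) powr (1/k)\<close>. Then \<open>\<phi>' u = \<psi> (exp u) / k\<close>,
  so \<open>\<psi>\<close> is decreasing iff \<open>\<phi>\<close> is concave. On the other hand \<open>\<phi>\<close> is a strictly decreasing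
  bijection onto the domain of \<open>g\<close> with inverse \<open>ln \<circ> g\<close>, and the inverse of a decreasing
  bijection between intervals is concave iff the bijection is. Concavity of \<open>\<phi>\<close> together with
  \<open>\<phi>' < 0\<close> also makes \<open>\<phi>\<close> unbounded below when \<open>supp l = (0,\<infinity>)\<close> (otherwise \<open>l\<close> vanishes
  somewhere), so by the intermediate value theorem every value \<open>s\<^sup>k\<close> with \<open>s\<close> in the domain of
  \<open>g\<close> is attained, as the definition of \<open>\<Lambda>\<^sub>k\<close> demands.\<close>

lemma concave_on_below_tangent:
  fixes f :: "real \<Rightarrow> real"
  assumes "concave_on A f" "open A" "connected A" "c \<in> A" "x \<in> A"
    and "(f has_real_derivative f') (at c)"
  shows "f x \<le> f c + f' * (x - c)"
proof -
  have "convex_on A (\<lambda>x. - f x)"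
    using assms(1) by (simp add: concave_on_def)
  moreover have "((\<lambda>x. - f x) has_field_derivative - f') (at c within A)"
    using DERIV_minus[OF assms(6)] has_field_derivative_at_within by blast
  ultimately have "- f x - - f c \<ge> - f' * (x - c)"
    using assms(2-5) by (intro convex_on_imp_above_tangent) (auto simp: interior_open)
  then show ?thesis
    by (simp add: algebra_simps)
qed

lemma concave_on_iff_deriv_antimono:
  fixes f f' :: "real \<Rightarrow> real"
  assumes "open A" "connected A"
    and deriv: "\<And>x. x \<in> A \<Longrightarrow> (f has_real_derivative f' x) (at x)"
  shows "concave_on A f \<longleftrightarrow> antimono_on A f'"
proof
  assume "antimono_on A f'"
  then have "convex_on A (\<lambda>x. - f x)"
  proof (intro convex_on_realI[OF \<open>connected A\<close>])
    show "((\<lambda>x. - f x) has_real_derivative - f' x) (at x)" if "x \<in> A" for x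
      using DERIV_minus[OF deriv[OF that]] .
  qed (auto simp: monotone_on_def)
  then show "concave_on A f"
    by (simp add: concave_on_def)
next
  assume conc: "concave_on A f"
  show "antimono_on A f'"
  proof (rule monotone_onI)
    fix x y assume xy: "x \<in> A" "y \<in> A" "x \<le> y"
    have "f y \<le> f x + f' x * (y - x)" "f x \<le> f y + f' y * (x - y)"
      using xy assms by (metis concave_on_below_tangent[OF conc])+
    then have "(f' y - f' x) * (y - x) \<le> 0"
      by (simp add: algebra_simps)
    then show "f' y \<le> f' x"
      using xy by (cases "x = y") (auto simp: mult_le_0_iff)
  qed
qed

lemma concave_on_UNIV_unbounded_below:
  fixes f :: "real \<Rightarrow> real"
  assumes "concave_on UNIV f" "(f has_real_derivative d) (at c)" "d < 0"
  shows "\<exists>x. f x < y"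
proof
  define x where "x = c + (f c - y) / (- d) + 1"
  have "f x \<le> f c + d * (x - c)"
    using concave_on_below_tangent[OF assms(1) _ _ _ _ assms(2)] by simp
  also have "\<dots> = y + d"
    using \<open>d < 0\<close> by (simp add: x_def field_simps)
  finally show "f x < y"
    using \<open>d < 0\<close> by simp
qed

lemma concave_on_antimono_inverse:
  fixes f g :: "real \<Rightarrow> real"
  assumes "convex A" "convex B"
    and f: "\<And>x. x \<in> A \<Longrightarrow> f x \<in> B" and g: "\<And>y. y \<in> B \<Longrightarrow> g y \<in> A"
    and gf: "\<And>x. x \<in> A \<Longrightarrow> g (f x) = x" and fg: "\<And>y. y \<in> B \<Longrightarrow> f (g y) = y"
    and mono: "antimono_on B g"
    and conc: "concave_on A f"
  shows "concave_on B g"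
  unfolding concave_on_iff
proof (intro conjI \<open>convex B\<close> ballI allI impI)
  fix y1 y2 u v :: real
  assume y: "y1 \<in> B" "y2 \<in> B" and uv: "0 \<le> u" "0 \<le> v" "u + v = 1"
  define z where "z = u *\<^sub>R g y1 + v *\<^sub>R g y2"
  have z: "z \<in> A"
    unfolding z_def using \<open>convex A\<close> g y uv by (simp add: convex_def)
  have "u * f (g y1) + v * f (g y2) \<le> f z"
    using conc g y uv unfolding concave_on_iff z_def by blast
  then have "u *\<^sub>R y1 + v *\<^sub>R y2 \<le> f z"
    using fg y by simp
  moreover have "u *\<^sub>R y1 + v *\<^sub>R y2 \<in> B"
    using \<open>convex B\<close> y uv by (simp add: convex_def)
  ultimately have "g (f z) \<le> g (u *\<^sub>R y1 + v *\<^sub>R y2)"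
    using mono f[OF z] by (simp add: monotone_on_def)
  then show "u * g y1 + v * g y2 \<le> g (u *\<^sub>R y1 + v *\<^sub>R y2)"
    using gf[OF z] z_def by simp
qed

lemma is_interval_supp_fun: "is_interval (supp_fun l)"
  unfolding is_interval_1 supp_fun_def by (auto intro: less_le_trans le_less_trans)

lemma convex_g_dom: "convex (g_dom k l)"
proof -
  have "x \<in> g_dom k l" if "a \<in> g_dom k l" "b \<in> g_dom k l" "a \<le> x" "x \<le> b" for a b x
  proof -
    have "x ^ k \<le> b ^ k"
      using that by (auto simp: g_dom_def intro: power_mono)
    then show ?thesis
      using that by (fastforce simp: g_dom_def)
  qed
  then show ?thesis
    unfolding is_interval_convex_1[symmetric] is_interval_1 by blast
qed

locale decreasing_profile =
  fixes l :: "real \<Rightarrow> real"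
  assumes nonneg: "\<And>t. 0 < t \<Longrightarrow> 0 \<le> l t"
    and cont: "continuous_on {0<..} l"
    and has_deriv: "\<And>t. t \<in> supp_fun l \<Longrightarrow> (l has_real_derivative deriv l t) (at t)"
    and deriv_neg: "\<And>t. t \<in> supp_fun l \<Longrightarrow> deriv l t < 0"
begin

lemma strict_antimono_on_supp:
  assumes "s \<in> supp_fun l" "t \<in> supp_fun l" "s < t"
  shows "l t < l s"
proof -
  have "x \<in> supp_fun l" if "s \<le> x" "x \<le> t" for x
    using assms that is_interval_supp_fun[of l] unfolding is_interval_1 by blast
  then show ?thesis
    using DERIV_neg_imp_decreasing[OF \<open>s < t\<close>] has_deriv deriv_neg by blast
qed

lemma inj_on_supp: "inj_on l (supp_fun l)"
proof (rule inj_onI)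
  fix x y assume "x \<in> supp_fun l" "y \<in> supp_fun l" "l x = l y"
  then show "x = y"
    using strict_antimono_on_supp by (cases x y rule: linorder_cases) force+
qed

lemma pos_on_supp:
  assumes "t \<in> supp_fun l"
  shows "0 < l t"
proof -
  obtain s where s: "0 < s" "0 < l s" "t < s" and "0 < t"
    using assms by (auto simp: supp_fun_def)
  then have "(t + s) / 2 \<in> supp_fun l"
    unfolding supp_fun_def by (intro CollectI conjI exI[of _ s]) auto
  then have "l ((t + s) / 2) < l t"
    using strict_antimono_on_supp[OF assms] s by simp
  moreover have "0 \<le> l ((t + s) / 2)"
    using nonneg \<open>0 < t\<close> s by simp
  ultimately show ?thesis
    by linarith
qed

lemma mem_supp_iff: "t \<in> supp_fun l \<longleftrightarrow> 0 < t \<and> 0 < l t"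
proof
  assume "t \<in> supp_fun l"
  then show "0 < t \<and> 0 < l t"
    using pos_on_supp unfolding supp_fun_def by blast
next
  assume t: "0 < t \<and> 0 < l t"
  then have "isCont l t"
    using cont by (simp add: continuous_on_eq_continuous_at)
  then obtain d where d: "d > 0" "\<And>y. dist y t < d \<Longrightarrow> dist (l y) (l t) < l t"
    using t unfolding continuous_at_eps_delta by blast
  have "\<bar>l (t + d/2) - l t\<bar> < l t"
    using d(1) d(2)[of "t + d/2"] by (simp add: dist_real_def)
  then have "0 < l (t + d/2)"
    by linarith
  then show "t \<in> supp_fun l"
    unfolding supp_fun_def using t \<open>d > 0\<close> by (intro CollectI conjI exI[of _ "t + d/2"]) auto
qed

end

locale decreasing_profile_root = decreasing_profile +
  fixes k :: nat
  assumes k_pos: "1 \<le> k"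
begin

definition \<psi> :: "real \<Rightarrow> real"
  where "\<psi> t = t * deriv l t / (l t powr (1 - 1 / real k))"

definition \<phi> :: "real \<Rightarrow> real"
  where "\<phi> u = l (exp u) powr (1 / real k)"

definition log_supp :: "real set"
  where "log_supp = exp -` supp_fun l"

lemma open_log_supp: "open log_supp"
proof -
  have "exp u < s \<longleftrightarrow> u < ln s" if "0 < s" for u s :: real
    using that by (metis exp_less_cancel_iff exp_ln)
  then have "log_supp = (\<Union>s\<in>{s. 0 < s \<and> 0 < l s}. {..<ln s})"
    unfolding log_supp_def supp_fun_def by auto
  then show ?thesis
    by (metis open_UN open_lessThan)
qed

lemma convex_log_supp: "convex log_supp"
proof -
  have "x \<in> log_supp" if "a \<in> log_supp" "b \<in> log_supp" "a \<le> x" "x \<le> b" for a b x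
  proof -
    have "exp a \<le> exp x" "exp x \<le> exp b"
      using that by simp_all
    then show ?thesis
      using that is_interval_supp_fun[of l] unfolding log_supp_def is_interval_1 vimage_eq by blast
  qed
  then show ?thesis
    unfolding is_interval_convex_1[symmetric] is_interval_1 by blast
qed

lemma has_real_derivative_\<phi>:
  assumes "u \<in> log_supp"
  shows "(\<phi> has_real_derivative \<psi> (exp u) / real k) (at u)"
proof -
  have u: "exp u \<in> supp_fun l"
    using assms by (simp add: log_supp_def)
  have L: "0 < l (exp u)"
    using pos_on_supp[OF u] .
  have "((\<lambda>u. l (exp u)) has_real_derivative deriv l (exp u) * exp u) (at u)"
    using DERIV_chain2[OF has_deriv[OF u] DERIV_exp] .
  from DERIV_fun_powr[OF this L, of "1 / real k"]
  have "(\<phi> has_real_derivative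
      1 / real k * l (exp u) powr (1 / real k - 1) * (deriv l (exp u) * exp u)) (at u)"
    unfolding \<phi>_def by simp
  moreover
  have "l (exp u) powr (1 / real k - 1) = inverse (l (exp u) powr (1 - 1 / real k))"
    using powr_minus[of "l (exp u)" "1 - 1 / real k"] by simp
  then have "1 / real k * l (exp u) powr (1 / real k - 1) * (deriv l (exp u) * exp u)
      = \<psi> (exp u) / real k"
    using k_pos L by (simp add: \<psi>_def field_simps)
  ultimately show ?thesis
    by (rule DERIV_cong)
qed

lemma concave_\<phi>_iff_antimono_\<psi>: "concave_on log_supp \<phi> \<longleftrightarrow> antimono_on (supp_fun l) \<psi>"
proof -
  have "concave_on log_supp \<phi> \<longleftrightarrow> antimono_on log_supp (\<lambda>u. \<psi> (exp u) / real k)"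
    using open_log_supp convex_connected[OF convex_log_supp] has_real_derivative_\<phi>
    by (rule concave_on_iff_deriv_antimono)
  also have "\<dots> \<longleftrightarrow> antimono_on (supp_fun l) \<psi>"
  proof
    assume mono: "antimono_on log_supp (\<lambda>u. \<psi> (exp u) / real k)"
    show "antimono_on (supp_fun l) \<psi>"
    proof (rule monotone_onI)
      fix x y assume xy: "x \<in> supp_fun l" "y \<in> supp_fun l" "x \<le> y"
      then have "0 < x" "0 < y"
        using mem_supp_iff by auto
      with xy have "ln x \<in> log_supp" "ln y \<in> log_supp" "ln x \<le> ln y"
        by (simp_all add: log_supp_def)
      then have "\<psi> (exp (ln y)) / real k \<le> \<psi> (exp (ln x)) / real k"
        using mono by (simp only: monotone_on_def)
      then have "\<psi> y / real k \<le> \<psi> x / real k"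
        using \<open>0 < x\<close> \<open>0 < y\<close> by simp
      then show "\<psi> y \<le> \<psi> x"
        using k_pos by (simp add: divide_le_cancel)
    qed
  next
    assume mono: "antimono_on (supp_fun l) \<psi>"
    show "antimono_on log_supp (\<lambda>u. \<psi> (exp u) / real k)"
    proof (rule monotone_onI)
      fix u v assume "u \<in> log_supp" "v \<in> log_supp" "u \<le> v"
      then have "\<psi> (exp v) \<le> \<psi> (exp u)"
        using mono by (simp add: monotone_on_def log_supp_def)
      then show "\<psi> (exp v) / real k \<le> \<psi> (exp u) / real k"
        by (simp add: divide_right_mono)
    qed
  qed
  finally show ?thesis .
qed

lemma \<phi>_power:
  assumes "u \<in> log_supp"
  shows "\<phi> u ^ k = l (exp u)"
proof -
  have "0 < l (exp u)"
    using assms pos_on_supp by (simp add: log_supp_def)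
  then have "(l (exp u) powr (1 / real k)) powr real k = l (exp u)"
    using k_pos by (simp add: powr_powr)
  then show ?thesis
    using \<open>0 < l (exp u)\<close> by (simp add: \<phi>_def powr_realpow)
qed

lemma \<phi>_pos:
  assumes "u \<in> log_supp"
  shows "0 < \<phi> u"
  using assms pos_on_supp[of "exp u"] by (simp add: \<phi>_def log_supp_def)

lemma \<phi>_strict_antimono:
  assumes "u \<in> log_supp" "v \<in> log_supp" "u < v"
  shows "\<phi> v < \<phi> u"
proof -
  have "l (exp v) < l (exp u)"
    using assms strict_antimono_on_supp by (simp add: log_supp_def)
  moreover have "0 \<le> l (exp v)"
    using nonneg by simp
  ultimately show ?thesis
    unfolding \<phi>_def using k_pos by (intro powr_less_mono2) auto
qed

lemma \<phi>_in_g_dom: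
  assumes "u \<in> log_supp"
  shows "\<phi> u \<in> g_dom k l"
proof -
  have u: "exp u \<in> supp_fun l"
    using assms by (simp add: log_supp_def)
  then obtain w where w: "0 < w" "0 < l w" "exp u < w"
    by (auto simp: supp_fun_def)
  then have "exp u / 2 \<in> supp_fun l"
    unfolding supp_fun_def by (intro CollectI conjI exI[of _ w]) auto
  then have "l (exp u) < l (exp u / 2)"
    using strict_antimono_on_supp[OF _ u] by simp
  then show ?thesis
    unfolding g_dom_def using \<phi>_power[OF assms] \<phi>_pos[OF assms]
    by (intro CollectI conjI exI[of _ "exp u / 2"]) auto
qed

lemma g_fun_\<phi>:
  assumes "u \<in> log_supp"
  shows "g_fun k l (\<phi> u) = exp u"
  unfolding g_fun_def \<phi>_power[OF assms]
  using the_inv_into_f_f[OF inj_on_supp] assms by (simp add: log_supp_def)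

lemma concave_\<phi>_imp_below_power:
  assumes conc: "concave_on log_supp \<phi>" and "0 < s"
  shows "\<exists>t>0. l t < s ^ k"
proof (cases "log_supp = UNIV")
  case True
  then have "1 \<in> supp_fun l"
    using exp_zero by (metis UNIV_I log_supp_def vimageE)
  then have "deriv l 1 < 0" "0 < l 1 powr (1 - 1 / real k)"
    using deriv_neg pos_on_supp[of 1] by auto
  then have "\<psi> 1 / real k < 0"
    using k_pos by (simp add: \<psi>_def divide_neg_pos)
  moreover have "(\<phi> has_real_derivative \<psi> 1 / real k) (at 0)"
    using True has_real_derivative_\<phi>[of 0] by simp
  ultimately obtain u where "\<phi> u < s"
    using concave_on_UNIV_unbounded_below conc True by metis
  then have "\<phi> u ^ k < s ^ k"
    using \<phi>_pos[of u] True k_pos by (intro power_strict_mono) auto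
  then show ?thesis
    using \<phi>_power[of u] True by (intro exI[of _ "exp u"]) auto
next
  case False
  then obtain u where "exp u \<notin> supp_fun l"
    by (auto simp: log_supp_def)
  then have "l (exp u) \<le> 0"
    using mem_supp_iff by auto
  moreover have "0 < s ^ k"
    using \<open>0 < s\<close> by simp
  ultimately show ?thesis
    by (intro exI[of _ "exp u"]) auto
qed

lemma g_dom_attained:
  assumes conc: "concave_on log_supp \<phi>" and s: "s \<in> g_dom k l"
  shows "\<exists>t\<in>supp_fun l. l t = s ^ k"
proof -
  obtain t0 where t0: "0 < t0" "s ^ k < l t0" and "0 < s"
    using s by (auto simp: g_dom_def)
  obtain t1 where t1: "0 < t1" "l t1 < s ^ k"
    using concave_\<phi>_imp_below_power[OF conc \<open>0 < s\<close>] by blast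
  have "continuous_on {min t0 t1..max t0 t1} l"
    using t0 t1 by (intro continuous_on_subset[OF cont]) auto
  then obtain t where t: "min t0 t1 \<le> t" "l t = s ^ k"
    using t0 t1 IVT'[of l t1 "s ^ k" t0] IVT2'[of l t1 "s ^ k" t0]
    by (cases "t0 \<le> t1") (auto simp: min_def max_def)
  then have "t \<in> supp_fun l"
    using t0 t1 \<open>0 < s\<close> mem_supp_iff by auto
  then show ?thesis
    using t by blast
qed

lemma g_fun_mem_supp:
  assumes attained: "\<forall>s\<in>g_dom k l. \<exists>t\<in>supp_fun l. l t = s ^ k" and s: "s \<in> g_dom k l"
  shows "g_fun k l s \<in> supp_fun l" "l (g_fun k l s) = s ^ k"
proof -
  obtain t where t: "t \<in> supp_fun l" "l t = s ^ k"
    using attained s by blast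
  then have "g_fun k l s = t"
    unfolding g_fun_def by (intro the_inv_into_f_eq[OF inj_on_supp]) simp_all
  then show "g_fun k l s \<in> supp_fun l" "l (g_fun k l s) = s ^ k"
    using t by simp_all
qed

lemma \<phi>_ln_g_fun:
  assumes attained: "\<forall>s\<in>g_dom k l. \<exists>t\<in>supp_fun l. l t = s ^ k" and s: "s \<in> g_dom k l"
  shows "ln (g_fun k l s) \<in> log_supp" "\<phi> (ln (g_fun k l s)) = s"
proof -
  have g: "g_fun k l s \<in> supp_fun l" "l (g_fun k l s) = s ^ k"
    using g_fun_mem_supp[OF attained s] by simp_all
  then have "0 < g_fun k l s"
    using mem_supp_iff by blast
  then show "ln (g_fun k l s) \<in> log_supp"
    using g by (simp add: log_supp_def)
  have "0 < s"
    using s by (simp add: g_dom_def)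
  then have "(s ^ k) powr (1 / real k) = s"
    using k_pos by (simp add: powr_realpow[symmetric] powr_powr)
  then show "\<phi> (ln (g_fun k l s)) = s"
    using g \<open>0 < g_fun k l s\<close> by (simp add: \<phi>_def)
qed

lemma concave_ln_g_fun_iff_concave_\<phi>:
  assumes attained: "\<forall>s\<in>g_dom k l. \<exists>t\<in>supp_fun l. l t = s ^ k"
  shows "concave_on (g_dom k l) (\<lambda>s. ln (g_fun k l s)) \<longleftrightarrow> concave_on log_supp \<phi>"
proof -
  have ln_g_\<phi>: "ln (g_fun k l (\<phi> u)) = u" if "u \<in> log_supp" for u
    using g_fun_\<phi>[OF that] by simp
  have "antimono_on log_supp \<phi>"
    by (rule monotone_onI) (metis \<phi>_strict_antimono order_le_less)
  moreover have "antimono_on (g_dom k l) (\<lambda>s. ln (g_fun k l s))"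
  proof (rule monotone_onI)
    fix s s' assume "s \<in> g_dom k l" "s' \<in> g_dom k l" "s \<le> s'"
    then show "ln (g_fun k l s') \<le> ln (g_fun k l s)"
      using \<phi>_ln_g_fun[OF attained] \<phi>_strict_antimono by (metis not_le order.strict_iff_not)
  qed
  ultimately show ?thesis
    using concave_on_antimono_inverse[OF convex_g_dom convex_log_supp, where g = \<phi>]
      concave_on_antimono_inverse[OF convex_log_supp convex_g_dom, where f = \<phi>]
      \<phi>_ln_g_fun[OF attained] \<phi>_in_g_dom ln_g_\<phi>
    by (metis (no_types, lifting))
qed

lemma Lambda_iff_concave_\<phi>: "l \<in> Lambda k \<longleftrightarrow> concave_on log_supp \<phi>"
proof -
  have "l \<in> Lambda k \<longleftrightarrow> (\<forall>s\<in>g_dom k l. \<exists>t\<in>supp_fun l. l t = s ^ k)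
      \<and> concave_on (g_dom k l) (\<lambda>s. ln (g_fun k l s))"
    unfolding Lambda_def using cont strict_antimono_on_supp by blast
  then show ?thesis
    using g_dom_attained concave_ln_g_fun_iff_concave_\<phi> by blast
qed

end

theorem mainTheorem9:
  fixes k :: nat and l :: "real \<Rightarrow> real"
  assumes k: "k \<ge> 1"
    and nonneg: "\<forall>t>0. 0 \<le> l t"
    and cont: "continuous_on {0<..} l"
    and diff: "\<forall>t\<in>supp_fun l. l differentiable (at t)"
    and C1: "continuous_on (supp_fun l) (deriv l)"
    and neg: "\<forall>t\<in>supp_fun l. deriv l t < 0"
  shows "l \<in> Lambda k \<longleftrightarrow>
    antimono_on (supp_fun l) (\<lambda>t. t * deriv l t / (l t powr (1 - 1 / real k)))"
proof -
  interpret decreasing_profile_root l k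
    using assms by unfold_locales (auto simp: DERIV_deriv_iff_real_differentiable)
  have "l \<in> Lambda k \<longleftrightarrow> antimono_on (supp_fun l) \<psi>"
    using Lambda_iff_concave_\<phi> concave_\<phi>_iff_antimono_\<psi> by simp
  then show ?thesis
    by (simp add: \<psi>_def[abs_def])
qed

end
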